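(* Let $A=\Bbbk Q/I$ be a finite-dimensional triangular monomial algebra, let $m,n>0$, and let $x\in\Bbbk(\Gamma_{m-1}\|\mathcal B)$ and $y\in\Bbbk(\Gamma_{n-1}\|\mathcal B)$ be irreducible cocycles. If $x\smile y\ne 0$, then $y\smile x=0$ (at the cochain level).
   Context: Let $\Bbbk$ be a field, $Q=(Q_0,Q_1,s,t)$ a finite quiver, and $A=\Bbbk Q/I$ a finite-dimensional monomial algebra, i.e. $I$ is an ideal generated by paths of length at least $2$. $A$ is triangular if $Q$ has no oriented cycles. Let $E=\Bbbk Q_0$, $A^e=A\otimes_\Bbbk A^{\mathrm{op}}$. Paths are written from right to left ($p=\alpha_n\cdots\alpha_1$, $t(\alpha_i)=s(\alpha_{i+1})$); $qp$ is concatenation. $\mathcal B$ = set of paths not in $I$ (a basis of $A$). If $p=bqa$, $q$ is a divisor; $q\le p$ denotes an occurrence with $\mathrm{pre}_p(q)=a$, $\mathrm{suf}_p(q)=b$; suffix/prefix mean $b$/$a$ trivial; proper means $q\ne p$. For $n\ge -1$, a left $n$-ambiguity is a path $p=u_{-1}u_0\cdots u_n$ with $u_{-1}\in Q_0$, $u_0\in Q_1$, $u_i\in\mathcal B$, and for $0\le i\le n-1$, $u_iu_{i+1}\in I$ while no proper suffix of $u_iu_{i+1}$ lies in $I$; a right $n$-ambiguity is $p=v_n\cdots v_0v_{-1}$ with $v_{-1}\in Q_0$, $v_0\in Q_1$, $v_i\in\mathcal B$, $v_{i+1}v_i\in I$ and no proper prefix of $v_{i+1}v_i$ in $I$. These notions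 coincide; $\Gamma_n$ is the set of $n$-ambiguities; decompositions are unique; $\sigma_m(p):=u_0\cdots u_m$, $\pi_m(p):=v_m\cdots v_0$; $\mathrm{Sub}(p)=\{q\in\Gamma_{n-1}:q\le p\}$. Bardzell's resolution: $\mathbb B(A)_{n+1}=A\otimes_E\Bbbk\Gamma_n\otimes_EA$, with $d(1\otimes p\otimes1)=\sum_{q\in\mathrm{Sub}(p)}\mathrm{suf}_p(q)\otimes q\otimes\mathrm{pre}_p(q)$ for $p\in\Gamma_n$, $n$ odd, and $d(1\otimes p\otimes1)=\mathrm{suf}_p(\pi_{n-1}(p))\otimes\pi_{n-1}(p)\otimes1-1\otimes\sigma_{n-1}(p)\otimes\mathrm{pre}_p(\sigma_{n-1}(p))$ for $n$ even. Let $\Bbbk(\Gamma_n\|\mathcal B):=\mathrm{Hom}_{E^e}(\Bbbk\Gamma_n,A)\cong\mathrm{Hom}_{A^e}(\mathbb B(A)_{n+1},A)$ (cochains of degree $n+1$); it has basis the maps $(p\|b)$ for $p\in\Gamma_n$, $b\in\mathcal B$ parallel to $p$, where $(p\|b)(q)=b$ if $q=p$ and $0$ for other $q\in\Gamma_n$. The differential is $(\partial f)(q)=\hat f(d(1\otimes q\otimes 1))$ with $\hat f(c\otimes p\otimes a)=c\,f(p)\,a$. A cocycle $x=\sum_{i=1}^k\alpha_i(p_i\|b_i)$ with all $\alpha_i\ne0$ and the $(p_i\|b_i)$ pairwise distinct is irreducible if for every proper nonempty subsequence $i_1<\dots<i_\ell$ ($\ell<k$) and all nonzero $\beta_j\in\Bbbk$,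 $\partial(\sum_j\beta_j(p_{i_j}\|b_{i_j}))\ne0$. Cup product of cochains: for $g\in\Bbbk(\Gamma_{j-1}\|\mathcal B)$ and $f\in\Bbbk(\Gamma_{i-1}\|\mathcal B)$, $g\smile f\in\Bbbk(\Gamma_{i+j-1}\|\mathcal B)$ is $(g\smile f)(q)=\sum e\,g(p_2)\,c\,f(p_1)\,a$ for $q\in\Gamma_{i+j-1}$, the sum running over all ways of writing $q=e\,p_2\,c\,p_1\,a$ as a concatenation of paths with $p_1\in\Gamma_{i-1}$, $p_2\in\Gamma_{j-1}$, and products taken in $A$. In particular $((p_2\|b_2)\smile(p_1\|b_1))(q)=\sum_{q=e p_2 c p_1 a}e\,b_2\,c\,b_1\,a$. *)

theory Defs
  imports Main
begin

text \<open>A finite quiver Q = (Q0,Q1,s,t) together with a set of paths (relations,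
 of length at least 2) generating the monomial ideal I.\<close>

record ('v,'a) mquiver =
  verts :: "'v set"
  arrs  :: "'a set"
  src   :: "'a \<Rightarrow> 'v"
  tgt   :: "'a \<Rightarrow> 'v"
  rels  :: "('v \<times> 'a list) set"

text \<open>A path is a pair (start vertex, list of arrows in the order they are traversed).
 The paper's path alpha_n ... alpha_1 (written right to left) is (s(alpha_1), [alpha_1,...,alpha_n]);
 a trivial path (vertex) v is (v, []).\<close>

type_synonym ('v,'a) path = "'v \<times> 'a list"

definition pstart :: "('v,'a) path \<Rightarrow> 'v" where
  "pstart p = fst p"

definition pend :: "('v,'a) mquiver \<Rightarrow> ('v,'a) path \<Rightarrow> 'v" where
  "pend Q p = (if snd p = [] then fst p else tgt Q (last (snd p)))"

definition plen :: "('v,'a) path \<Rightarrow> nat" where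
  "plen p = length (snd p)"

definition valid :: "('v,'a) mquiver \<Rightarrow> ('v,'a) path \<Rightarrow> bool" where
  "valid Q p \<longleftrightarrow> fst p \<in> verts Q \<and> set (snd p) \<subseteq> arrs Q \<and>
     (snd p \<noteq> [] \<longrightarrow> src Q (hd (snd p)) = fst p) \<and>
     (\<forall>i. Suc i < length (snd p) \<longrightarrow> tgt Q (snd p ! i) = src Q (snd p ! Suc i))"

text \<open>cat q p is the concatenation qp of the paper (first p, then q).\<close>
definition cat :: "('v,'a) path \<Rightarrow> ('v,'a) path \<Rightarrow> ('v,'a) path" where
  "cat q p = (fst p, snd p @ snd q)"

definition composable :: "('v,'a) mquiver \<Rightarrow> ('v,'a) path \<Rightarrow> ('v,'a) path \<Rightarrow> bool" where
  "composable Q q p \<longleftrightarrow> pend Q p = pstart q"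

definition parallel :: "('v,'a) mquiver \<Rightarrow> ('v,'a) path \<Rightarrow> ('v,'a) path \<Rightarrow> bool" where
  "parallel Q p b \<longleftrightarrow> pstart p = pstart b \<and> pend Q p = pend Q b"

definition vert_at :: "('v,'a) mquiver \<Rightarrow> ('v,'a) path \<Rightarrow> nat \<Rightarrow> 'v" where
  "vert_at Q p i = (if i = 0 then fst p else tgt Q (snd p ! (i - 1)))"

definition subpath :: "('v,'a) mquiver \<Rightarrow> ('v,'a) path \<Rightarrow> nat \<Rightarrow> nat \<Rightarrow> ('v,'a) path" where
  "subpath Q p i j = (vert_at Q p i, take (j - i) (drop i (snd p)))"

definition inI :: "('v,'a) mquiver \<Rightarrow> ('v,'a) path \<Rightarrow> bool" where
  "inI Q p \<longleftrightarrow> (\<exists>i j. i \<le> j \<and> j \<le> plen p \<and> subpath Q p i j \<in> rels Q)"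

definition basis :: "('v,'a) mquiver \<Rightarrow> ('v,'a) path set" where
  "basis Q = {p. valid Q p \<and> \<not> inI Q p}"

definition monomial_quiver :: "('v,'a) mquiver \<Rightarrow> bool" where
  "monomial_quiver Q \<longleftrightarrow> finite (verts Q) \<and> finite (arrs Q) \<and>
     (\<forall>a\<in>arrs Q. src Q a \<in> verts Q \<and> tgt Q a \<in> verts Q) \<and>
     (\<forall>r\<in>rels Q. valid Q r \<and> plen r \<ge> 2)"

definition triangular :: "('v,'a) mquiver \<Rightarrow> bool" where
  "triangular Q \<longleftrightarrow> (\<forall>p. valid Q p \<and> plen p > 0 \<longrightarrow> pstart p \<noteq> pend Q p)"

definition fin_dim :: "('v,'a) mquiver \<Rightarrow> bool" where
  "fin_dim Q \<longleftrightarrow> finite (basis Q)"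

fun catl :: "('v,'a) path list \<Rightarrow> ('v,'a) path" where
  "catl [] = undefined"
| "catl [u] = u"
| "catl (u # us) = cat u (catl us)"

text \<open>Left n-ambiguity p = u_{-1} u_0 ... u_n, recorded as us = [u_0,...,u_n]
 (u_{-1} is the trivial path at the end of p).\<close>
definition left_dec :: "('v,'a) mquiver \<Rightarrow> nat \<Rightarrow> ('v,'a) path \<Rightarrow> ('v,'a) path list \<Rightarrow> bool" where
  "left_dec Q n p us \<longleftrightarrow> length us = Suc n \<and> plen (us ! 0) = 1 \<and>
     (\<forall>i\<le>n. us ! i \<in> basis Q) \<and>
     (\<forall>i<n. composable Q (us ! i) (us ! Suc i) \<and>
        inI Q (cat (us ! i) (us ! Suc i)) \<and>
        (\<forall>k. 0 < k \<and> k \<le> plen (cat (us ! i) (us ! Suc i)) \<longrightarrow>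
           \<not> inI Q (subpath Q (cat (us ! i) (us ! Suc i)) k (plen (cat (us ! i) (us ! Suc i)))))) \<and>
     p = catl us"

text \<open>Right n-ambiguity p = v_n ... v_0 v_{-1}, recorded as vs = [v_0,...,v_n].\<close>
definition right_dec :: "('v,'a) mquiver \<Rightarrow> nat \<Rightarrow> ('v,'a) path \<Rightarrow> ('v,'a) path list \<Rightarrow> bool" where
  "right_dec Q n p vs \<longleftrightarrow> length vs = Suc n \<and> plen (vs ! 0) = 1 \<and>
     (\<forall>i\<le>n. vs ! i \<in> basis Q) \<and>
     (\<forall>i<n. composable Q (vs ! Suc i) (vs ! i) \<and>
        inI Q (cat (vs ! Suc i) (vs ! i)) \<and>
        (\<forall>k. k < plen (cat (vs ! Suc i) (vs ! i)) \<longrightarrow>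
           \<not> inI Q (subpath Q (cat (vs ! Suc i) (vs ! i)) 0 k))) \<and>
     p = catl (rev vs)"

text \<open>Gamma_n for n >= 0 (the cases needed; Gamma_{-1} = Q_0 is never used).\<close>
definition Gamma :: "('v,'a) mquiver \<Rightarrow> nat \<Rightarrow> ('v,'a) path set" where
  "Gamma Q n = {p. \<exists>us. left_dec Q n p us}"

definition sigma :: "('v,'a) mquiver \<Rightarrow> nat \<Rightarrow> nat \<Rightarrow> ('v,'a) path \<Rightarrow> ('v,'a) path" where
  "sigma Q n m p = catl (take (Suc m) (THE us. left_dec Q n p us))"

definition pi :: "('v,'a) mquiver \<Rightarrow> nat \<Rightarrow> nat \<Rightarrow> ('v,'a) path \<Rightarrow> ('v,'a) path" where
  "pi Q n m p = catl (rev (take (Suc m) (THE vs. right_dec Q n p vs)))"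

text \<open>A cochain in k(Gamma_n || B) is given by its coefficients: f (p,b) is the
 coefficient of the basis map (p||b).\<close>
type_synonym ('v,'a,'k) cochain = "('v,'a) path \<times> ('v,'a) path \<Rightarrow> 'k"

definition is_cochain :: "('v,'a) mquiver \<Rightarrow> nat \<Rightarrow> ('v,'a,'k::zero) cochain \<Rightarrow> bool" where
  "is_cochain Q n f \<longleftrightarrow>
     (\<forall>p b. f (p, b) \<noteq> 0 \<longrightarrow> p \<in> Gamma Q n \<and> b \<in> basis Q \<and> parallel Q p b)"

text \<open>Coefficient of the basis element r in c f(q) a (product in A).\<close>
definition hat :: "('v,'a) mquiver \<Rightarrow> ('v,'a,'k::comm_ring_1) cochain \<Rightarrow>
    ('v,'a) path \<Rightarrow> ('v,'a) path \<Rightarrow> ('v,'a) path \<Rightarrow> ('v,'a) path \<Rightarrow> 'k" where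
  "hat Q f c q a r = (\<Sum>b\<in>basis Q.
      if parallel Q q b \<and> composable Q b a \<and> composable Q c b \<and> cat c (cat b a) = r
      then f (q, b) else 0)"

text \<open>Coboundary of a cochain f on Gamma_{n-1}, giving a cochain on Gamma_n (n >= 1).\<close>
definition cobound :: "('v,'a) mquiver \<Rightarrow> nat \<Rightarrow> ('v,'a,'k::comm_ring_1) cochain \<Rightarrow> ('v,'a,'k) cochain" where
  "cobound Q n f = (\<lambda>(q, r).
     if q \<in> Gamma Q n \<and> r \<in> basis Q \<and> parallel Q q r then
       (if odd n then
          (\<Sum>(i, j)\<in>{(i, j). i \<le> j \<and> j \<le> plen q}.
             if subpath Q q i j \<in> Gamma Q (n - 1)
             then hat Q f (subpath Q q j (plen q)) (subpath Q q i j) (subpath Q q 0 i) r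
             else 0)
        else
          (let P = pi Q n (n - 1) q; S = sigma Q n (n - 1) q in
             hat Q f (subpath Q q (plen P) (plen q)) P (subpath Q q 0 0) r
           - hat Q f (subpath Q q (plen q) (plen q)) S (subpath Q q 0 (plen q - plen S)) r))
     else 0)"

text \<open>Cup product g \<smile> f for g on Gamma_a (i.e. j = a+1) and f on Gamma_b (i = b+1),
 giving a cochain on Gamma_{a+b+1}: sum over q = e p2 c p1 a0.\<close>
definition cup :: "('v,'a) mquiver \<Rightarrow> nat \<Rightarrow> nat \<Rightarrow> ('v,'a,'k::comm_ring_1) cochain \<Rightarrow>
    ('v,'a,'k) cochain \<Rightarrow> ('v,'a,'k) cochain" where
  "cup Q a b g f = (\<lambda>(q, r).
     if q \<in> Gamma Q (a + b + 1) \<and> r \<in> basis Q \<and> parallel Q q r then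
       (\<Sum>(i1, i2, i3, i4)\<in>{(i1, i2, i3, i4). i1 \<le> i2 \<and> i2 \<le> i3 \<and> i3 \<le> i4 \<and> i4 \<le> plen q}.
          (\<Sum>b2\<in>basis Q. \<Sum>b1\<in>basis Q.
             (let a0 = subpath Q q 0 i1; p1 = subpath Q q i1 i2; c = subpath Q q i2 i3;
                  p2 = subpath Q q i3 i4; e = subpath Q q i4 (plen q) in
              if p1 \<in> Gamma Q b \<and> p2 \<in> Gamma Q a \<and> parallel Q p1 b1 \<and> parallel Q p2 b2 \<and>
                 cat e (cat b2 (cat c (cat b1 a0))) = r
              then g (p2, b2) * f (p1, b1) else 0)))
     else 0)"

definition irreducible_cocycle :: "('v,'a) mquiver \<Rightarrow> nat \<Rightarrow> ('v,'a,'k::comm_ring_1) cochain \<Rightarrow> bool" where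
  "irreducible_cocycle Q n x \<longleftrightarrow> is_cochain Q n x \<and> cobound Q (Suc n) x = (\<lambda>_. 0) \<and>
     (\<forall>S. S \<subset> {s. x s \<noteq> 0} \<and> S \<noteq> {} \<longrightarrow>
        (\<forall>\<beta> :: (('v,'a) path \<times> ('v,'a) path \<Rightarrow> 'k). (\<forall>s\<in>S. \<beta> s \<noteq> 0) \<longrightarrow>
           cobound Q (Suc n) (\<lambda>s. if s \<in> S then \<beta> s else 0) \<noteq> (\<lambda>_. 0)))"

end

(* In a triangular quiver every path has distinct arrows, and a parallel path with the same
   arrows is the same path.  The coboundary of a term (p||b) only consists of terms (q||r) in which
   a piece p of q is replaced by b, so the pair of arrow sets by which p and b differ is passed on;
   restricting a cocycle to one such pair therefore gives again a cocycle.  Hence all terms of an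
   irreducible cocycle differ by the same pair of arrow sets, and for any two of its terms (p||b),
   (p'||b') there is a path of positive length from the start of p to the end of p'.
   A nonzero cup product x \<smile> y contains an ambiguity in which a term p1 of y is followed by a
   term p2 of x, giving a path from the end of p1 to the start of p2.  If y \<smile> x were nonzero
   too, these paths would close up to an oriented cycle.
   For the even coboundary one needs that pi(q) is a prefix of q, i.e. that every left
   ambiguity is a right one; this is shown by comparing the positions of the blocks of both
   decompositions. *)

theory Submission
  imports Defs
begin

lemma plen_subpath: "j \<le> plen p \<Longrightarrow> plen (subpath Q p i j) = j - i"
  by (simp add: plen_def subpath_def)

lemma plen_cat: "plen (cat q p) = plen p + plen q"
  by (simp add: plen_def cat_def)

lemma pstart_subpath: "pstart (subpath Q p i j) = vert_at Q p i"
  by (simp add: pstart_def subpath_def)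

lemma pstart_cat: "pstart (cat q p) = pstart p"
  by (simp add: pstart_def cat_def)

lemma pend_subpath:
  assumes "i \<le> j" "j \<le> plen p"
  shows "pend Q (subpath Q p i j) = vert_at Q p j"
proof (cases "i = j")
  case True
  then show ?thesis by (simp add: pend_def subpath_def)
next
  case False
  let ?s = "take (j - i) (drop i (snd p))"
  have ne: "?s \<noteq> []" using assms False by (simp add: plen_def)
  have "last ?s = snd p ! (j - 1)"
    using ne assms False by (simp add: last_conv_nth plen_def)
  then show ?thesis using ne False by (simp add: pend_def subpath_def vert_at_def)
qed

lemma pend_cat: "composable Q q p \<Longrightarrow> pend Q (cat q p) = pend Q q"
  by (auto simp add: composable_def pend_def cat_def pstart_def)

lemma cat_assoc: "cat a (cat b c) = cat (cat a b) c"
  by (simp add: cat_def)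

lemma subpath_full: "subpath Q p 0 (plen p) = p"
  by (simp add: subpath_def vert_at_def plen_def)

lemma subpath_subpath:
  assumes "i \<le> j" "j \<le> plen p" "i0 \<le> j0" "j0 \<le> j - i"
  shows "subpath Q (subpath Q p i j) i0 j0 = subpath Q p (i + i0) (i + j0)"
proof -
  have "drop i0 (take (j - i) (drop i (snd p))) = take (j - i - i0) (drop (i + i0) (snd p))"
    by (simp add: drop_take add.commute)
  then have "snd (subpath Q (subpath Q p i j) i0 j0) = snd (subpath Q p (i + i0) (i + j0))"
    using assms by (simp add: subpath_def min_def)
  moreover have "fst (subpath Q (subpath Q p i j) i0 j0) = fst (subpath Q p (i + i0) (i + j0))"
  proof (cases "i0 = 0")
    case False
    then have "take (j - i) (drop i (snd p)) ! (i0 - 1) = snd p ! (i + i0 - 1)"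
      using assms by (simp add: plen_def)
    then show ?thesis using False by (simp add: subpath_def vert_at_def)
  qed (simp add: subpath_def vert_at_def)
  ultimately show ?thesis by (simp add: prod_eq_iff)
qed

lemma cat_subpath:
  assumes "i \<le> j" "j \<le> k" "k \<le> plen p"
  shows "cat (subpath Q p j k) (subpath Q p i j) = subpath Q p i k"
proof -
  have "take (k - i) (drop i (snd p))
      = take (j - i) (drop i (snd p)) @ take (k - j) (drop (j - i) (drop i (snd p)))"
    using assms take_add[of "j - i" "k - j" "drop i (snd p)"] by simp
  then show ?thesis using assms by (simp add: cat_def subpath_def)
qed

lemma snd_subpath_split3:
  assumes "i \<le> j" "j \<le> plen q"
  shows "snd (cat (subpath Q q j (plen q)) (cat (subpath Q q i j) (subpath Q q 0 i))) = snd q"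
proof -
  have "take i (snd q) @ take (j - i) (drop i (snd q)) = take j (snd q)"
    using take_add[of i "j - i" "snd q"] assms by simp
  then show ?thesis by (simp add: cat_def subpath_def plen_def flip: append_assoc)
qed

lemma subpath_cat_prefix:
  assumes "i \<le> j" "j \<le> plen p"
  shows "subpath Q (cat w p) i j = subpath Q p i j"
proof -
  have "fst (subpath Q (cat w p) i j) = fst (subpath Q p i j)"
  proof (cases "i = 0")
    case False
    then have "i - 1 < plen p" using assms by simp
    then show ?thesis using False by (simp add: subpath_def vert_at_def cat_def plen_def nth_append)
  qed (simp add: subpath_def vert_at_def cat_def)
  moreover have "snd (subpath Q (cat w p) i j) = snd (subpath Q p i j)"
    using assms by (simp add: subpath_def cat_def plen_def)
  ultimately show ?thesis by (simp add: prod_eq_iff)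
qed

lemma subpath_cat_suffix:
  assumes "composable Q w p"
  shows "subpath Q (cat w p) (plen p) (plen p + plen w) = w"
proof -
  have "vert_at Q (cat w p) (plen p) = pend Q p"
    by (simp add: vert_at_def cat_def plen_def pend_def last_conv_nth nth_append)
  then show ?thesis
    using assms by (simp add: subpath_def cat_def plen_def prod_eq_iff composable_def pstart_def)
qed

lemma vert_at_in_verts:
  assumes "monomial_quiver Q" "valid Q p" "i \<le> plen p"
  shows "vert_at Q p i \<in> verts Q"
proof (cases "i = 0")
  case False
  then have "snd p ! (i - 1) \<in> arrs Q" using assms by (auto simp: valid_def plen_def)
  then show ?thesis using False assms by (simp add: vert_at_def monomial_quiver_def)
qed (use assms in \<open>simp add: vert_at_def valid_def\<close>)

lemma src_nth_valid:
  assumes "valid Q p" "i < plen p"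
  shows "src Q (snd p ! i) = vert_at Q p i"
proof (cases i)
  case (Suc k)
  then have "tgt Q (snd p ! k) = src Q (snd p ! Suc k)" using assms by (simp add: valid_def plen_def)
  then show ?thesis using Suc by (simp add: vert_at_def)
qed (use assms in \<open>simp add: vert_at_def valid_def plen_def hd_conv_nth\<close>)

lemma valid_subpath:
  assumes mq: "monomial_quiver Q" and v: "valid Q p" and ij: "i \<le> j" "j \<le> plen p"
  shows "valid Q (subpath Q p i j)"
proof -
  let ?s = "take (j - i) (drop i (snd p))"
  have "fst (subpath Q p i j) \<in> verts Q"
    using vert_at_in_verts[OF mq v] ij by (simp add: subpath_def)
  moreover have "set ?s \<subseteq> arrs Q"
    using v unfolding valid_def by (meson order_trans set_drop_subset set_take_subset)
  moreover have "src Q (hd ?s) = fst (subpath Q p i j)" if ne: "?s \<noteq> []"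
  proof -
    have "i < plen p" "hd ?s = snd p ! i" using ne by (simp_all add: plen_def hd_conv_nth)
    then show ?thesis using src_nth_valid[OF v] by (simp add: subpath_def)
  qed
  moreover have "tgt Q (?s ! k) = src Q (?s ! Suc k)" if k: "Suc k < length ?s" for k
  proof -
    have "Suc (i + k) < length (snd p)" using k by auto
    then have "tgt Q (snd p ! (i + k)) = src Q (snd p ! Suc (i + k))"
      using v unfolding valid_def by blast
    moreover have "drop i (snd p) ! k = snd p ! (i + k)" "drop i (snd p) ! Suc k = snd p ! Suc (i + k)"
      using \<open>Suc (i + k) < length (snd p)\<close> by simp_all
    ultimately show ?thesis using k by simp
  qed
  ultimately show ?thesis unfolding valid_def by (simp add: subpath_def)
qed

lemma valid_cat:
  assumes vq: "valid Q q" and vp: "valid Q p" and c: "composable Q q p"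
  shows "valid Q (cat q p)"
proof -
  have e: "pend Q p = fst q" using c by (simp add: composable_def pstart_def)
  have "snd (cat q p) \<noteq> [] \<longrightarrow> src Q (hd (snd (cat q p))) = fst (cat q p)"
    using vq vp e by (cases "snd p = []") (simp_all add: cat_def valid_def pend_def)
  moreover have "tgt Q (snd (cat q p) ! k) = src Q (snd (cat q p) ! Suc k)"
    if k: "Suc k < length (snd (cat q p))" for k
  proof (cases "Suc k < length (snd p)")
    case True
    then show ?thesis using vp by (simp add: cat_def valid_def nth_append)
  next
    case False
    show ?thesis
    proof (cases "Suc k = length (snd p)")
      case True
      then have "snd p \<noteq> []" "k = length (snd p) - 1" by auto
      then have "tgt Q (snd p ! k) = fst q" using e by (simp add: pend_def last_conv_nth)
      moreover have "snd q \<noteq> []" using k True by (simp add: cat_def)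
      ultimately show ?thesis using True vq by (simp add: cat_def nth_append valid_def hd_conv_nth)
    next
      case False
      then have "length (snd p) \<le> k" "Suc (k - length (snd p)) < length (snd q)"
        using k \<open>\<not> Suc k < length (snd p)\<close> by (auto simp: cat_def)
      then show ?thesis using vq unfolding valid_def by (simp add: cat_def nth_append Suc_diff_le)
    qed
  qed
  ultimately show ?thesis using vp vq unfolding valid_def by (auto simp: cat_def)
qed

lemma valid_tl:
  assumes "monomial_quiver Q" "valid Q (w, \<alpha> # xs)"
  shows "valid Q (tgt Q \<alpha>, xs)"
  using valid_subpath[OF assms, of 1 "Suc (length xs)"]
  by (simp add: plen_def subpath_def vert_at_def)

lemma triangular_vert_at_inj:
  assumes tr: "triangular Q" and mq: "monomial_quiver Q" and v: "valid Q p"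
    and ij: "i < j" "j \<le> plen p"
  shows "vert_at Q p i \<noteq> vert_at Q p j"
proof -
  have "valid Q (subpath Q p i j)" "plen (subpath Q p i j) > 0"
    using valid_subpath[OF mq v] ij by (simp_all add: plen_subpath)
  then have "pstart (subpath Q p i j) \<noteq> pend Q (subpath Q p i j)"
    using tr unfolding triangular_def by blast
  then show ?thesis using ij by (simp add: pstart_subpath pend_subpath)
qed

lemma triangular_distinct_arrows:
  assumes tr: "triangular Q" and mq: "monomial_quiver Q" and v: "valid Q p"
  shows "distinct (snd p)"
proof -
  have "snd p ! i \<noteq> snd p ! j" if "i < j" "j < length (snd p)" for i j
  proof
    assume "snd p ! i = snd p ! j"
    then have "vert_at Q p (Suc i) = vert_at Q p (Suc j)" by (simp add: vert_at_def)
    with triangular_vert_at_inj[OF tr mq v, of "Suc i" "Suc j"] that show False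
      by (simp add: plen_def)
  qed
  then show ?thesis unfolding distinct_conv_nth by (metis linorder_neqE_nat)
qed

text \<open>The first arrows agree: among the common arrows only one leaves the start vertex, since
  every other arrow of a path leaves a later, hence different, vertex.\<close>
lemma triangular_path_eq_if_same_arrows:
  assumes tr: "triangular Q" and mq: "monomial_quiver Q"
  shows "valid Q (w, xs) \<Longrightarrow> valid Q (w, ys) \<Longrightarrow> set xs = set ys \<Longrightarrow> xs = ys"
proof (induction xs arbitrary: w ys)
  case (Cons \<alpha> xs)
  obtain \<beta> ys' where ys: "ys = \<beta> # ys'" using Cons.prems(3) by (cases ys) auto
  have "\<alpha> = \<beta>"
  proof (rule ccontr)
    assume "\<alpha> \<noteq> \<beta>"
    then have "\<alpha> \<in> set ys'" using Cons.prems(3) ys by auto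
    then obtain k where k: "k < length ys'" "ys' ! k = \<alpha>" by (auto simp: in_set_conv_nth)
    then have "Suc k < plen (w, ys)" using ys by (simp add: plen_def)
    then have "vert_at Q (w, ys) 0 \<noteq> vert_at Q (w, ys) (Suc k)"
      using triangular_vert_at_inj[OF tr mq Cons.prems(2)] by simp
    moreover have "src Q \<alpha> = w" using Cons.prems(1) by (simp add: valid_def)
    ultimately show False
      using src_nth_valid[OF Cons.prems(2) \<open>Suc k < plen (w, ys)\<close>] k ys by (simp add: vert_at_def)
  qed
  moreover have "distinct (\<alpha> # xs)" "distinct (\<beta> # ys')"
    using triangular_distinct_arrows[OF tr mq Cons.prems(1)]
      triangular_distinct_arrows[OF tr mq Cons.prems(2)] ys by simp_all
  then have "set xs = set ys'" using Cons.prems(3) ys \<open>\<alpha> = \<beta>\<close> by auto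
  moreover have "valid Q (tgt Q \<alpha>, xs)" "valid Q (tgt Q \<alpha>, ys')"
    using valid_tl[OF mq Cons.prems(1)] valid_tl[OF mq, of w \<beta> ys'] Cons.prems(2) ys \<open>\<alpha> = \<beta>\<close>
    by simp_all
  ultimately show ?case using Cons.IH ys by simp
qed simp

definition reach :: "('v,'a) mquiver \<Rightarrow> 'v \<Rightarrow> 'v \<Rightarrow> bool" where
  "reach Q u v \<longleftrightarrow> (\<exists>w. valid Q w \<and> pstart w = u \<and> pend Q w = v)"

definition reach1 :: "('v,'a) mquiver \<Rightarrow> 'v \<Rightarrow> 'v \<Rightarrow> bool" where
  "reach1 Q u v \<longleftrightarrow> (\<exists>w. valid Q w \<and> plen w > 0 \<and> pstart w = u \<and> pend Q w = v)"

lemma reach1_reach_trans: "reach1 Q u v \<Longrightarrow> reach Q v w \<Longrightarrow> reach1 Q u w"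
  unfolding reach_def reach1_def
  by (metis add_gr_0 composable_def pend_cat plen_cat pstart_cat valid_cat)

lemma reach_reach1_trans: "reach Q u v \<Longrightarrow> reach1 Q v w \<Longrightarrow> reach1 Q u w"
  unfolding reach_def reach1_def
  by (metis add_gr_0 composable_def pend_cat plen_cat pstart_cat valid_cat)

lemma reach1_imp_reach: "reach1 Q u v \<Longrightarrow> reach Q u v"
  unfolding reach1_def reach_def by blast

lemma triangular_not_reach1_refl: "triangular Q \<Longrightarrow> \<not> reach1 Q u u"
  unfolding reach1_def triangular_def by (metis pstart_def)

lemma reach_vert_at:
  assumes "monomial_quiver Q" "valid Q p" "i \<le> j" "j \<le> plen p"
  shows "reach Q (vert_at Q p i) (vert_at Q p j)"
  unfolding reach_def using assms valid_subpath pstart_subpath pend_subpath by metis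

lemma reach_through_arrow:
  assumes mq: "monomial_quiver Q" and v: "valid Q p" and \<alpha>: "\<alpha> \<in> set (snd p)"
  shows "reach1 Q (pstart p) (tgt Q \<alpha>)" and "reach Q (tgt Q \<alpha>) (pend Q p)"
proof -
  obtain k where k: "k < plen p" "snd p ! k = \<alpha>" using \<alpha> by (auto simp: in_set_conv_nth plen_def)
  have t: "vert_at Q p (Suc k) = tgt Q \<alpha>" using k by (simp add: vert_at_def)
  have "valid Q (subpath Q p 0 (Suc k))" using valid_subpath[OF mq v, of 0 "Suc k"] k by simp
  then show "reach1 Q (pstart p) (tgt Q \<alpha>)"
    unfolding reach1_def using k t
    by (intro exI[of _ "subpath Q p 0 (Suc k)"])
      (simp add: plen_subpath pstart_subpath pend_subpath, simp add: vert_at_def pstart_def)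
  have "pend Q p = vert_at Q p (plen p)"
    by (metis pend_subpath subpath_full order_refl zero_le)
  then show "reach Q (tgt Q \<alpha>) (pend Q p)"
    using reach_vert_at[OF mq v, of "Suc k" "plen p"] k t by simp
qed

lemma reach1_through_common_arrow:
  assumes "monomial_quiver Q" "valid Q p" "valid Q p'" "\<alpha> \<in> set (snd p)" "\<alpha> \<in> set (snd p')"
  shows "reach1 Q (pstart p) (pend Q p')"
  using reach1_reach_trans[OF reach_through_arrow(1)[OF assms(1,2,4)]
      reach_through_arrow(2)[OF assms(1,3,5)]] .

lemma catl_Cons: "us \<noteq> [] \<Longrightarrow> catl (u # us) = cat u (catl us)"
  by (cases us) auto

lemma catl_append: "us1 \<noteq> [] \<Longrightarrow> us2 \<noteq> [] \<Longrightarrow> catl (us1 @ us2) = cat (catl us1) (catl us2)"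
proof (induction us1)
  case (Cons u us1)
  then show ?case by (cases "us1 = []") (simp_all add: catl_Cons cat_assoc)
qed simp

lemma plen_catl: "us \<noteq> [] \<Longrightarrow> plen (catl us) = sum_list (map plen us)"
proof (induction us)
  case (Cons u us)
  then show ?case by (cases "us = []") (auto simp: catl_Cons plen_cat)
qed simp

definition composable_chain :: "('v,'a) mquiver \<Rightarrow> ('v,'a) path list \<Rightarrow> bool" where
  "composable_chain Q us \<longleftrightarrow> (\<forall>i. Suc i < length us \<longrightarrow> composable Q (us ! i) (us ! Suc i))"

lemma composable_chain_Cons:
  assumes "composable_chain Q (u # us)"
  shows "composable_chain Q us" and "us \<noteq> [] \<Longrightarrow> composable Q u (hd us)"
proof -
  show "composable_chain Q us"
    using assms unfolding composable_chain_def by (metis Suc_less_eq length_Cons nth_Cons_Suc)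
  assume "us \<noteq> []"
  then have "Suc 0 < length (u # us)" by (cases us) auto
  then show "composable Q u (hd us)"
    using assms \<open>us \<noteq> []\<close> unfolding composable_chain_def by (auto simp: hd_conv_nth)
qed

lemma composable_catl:
  "composable_chain Q (u # us) \<Longrightarrow> us \<noteq> [] \<Longrightarrow> composable Q u (catl us)"
proof (induction us arbitrary: u)
  case (Cons u' us)
  have "composable Q u u'" using composable_chain_Cons(2)[OF Cons.prems(1)] by simp
  moreover have "pend Q (catl (u' # us)) = pend Q u'"
  proof (cases "us = []")
    case False
    then show ?thesis
      using Cons.IH[OF composable_chain_Cons(1)[OF Cons.prems(1)]] pend_cat by (simp add: catl_Cons)
  qed simp
  ultimately show ?case by (simp add: composable_def)
qed simp

lemma valid_catl:
  "composable_chain Q us \<Longrightarrow> us \<noteq> [] \<Longrightarrow> \<forall>u\<in>set us. valid Q u \<Longrightarrow> valid Q (catl us)"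
proof (induction us)
  case (Cons u us)
  show ?case
  proof (cases "us = []")
    case False
    then have "valid Q (catl us)"
      using Cons.IH composable_chain_Cons(1)[OF Cons.prems(1)] Cons.prems(3) by simp
    then show ?thesis
      using valid_cat[of Q u "catl us"] composable_catl[OF Cons.prems(1) False] Cons.prems(3) False
      by (simp add: catl_Cons)
  qed (use Cons.prems in simp)
qed simp

definition block_end :: "('v,'a) path list \<Rightarrow> nat \<Rightarrow> nat" where
  "block_end us i = sum_list (map plen (drop i us))"

lemma block_end_Suc: "i < length us \<Longrightarrow> block_end us i = plen (us ! i) + block_end us (Suc i)"
  unfolding block_end_def by (simp add: Cons_nth_drop_Suc[symmetric])

lemma block_end_antimono: "i \<le> j \<Longrightarrow> block_end us j \<le> block_end us i"
proof -
  assume "i \<le> j"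
  then have "drop i us = take (j - i) (drop i us) @ drop j us"
    by (metis append_take_drop_id drop_drop le_add_diff_inverse2)
  then show ?thesis unfolding block_end_def by (metis le_add2 map_append sum_list_append)
qed

lemma block_end_0: "us \<noteq> [] \<Longrightarrow> block_end us 0 = plen (catl us)"
  by (simp add: block_end_def plen_catl)

lemma block_end_length: "block_end us (length us) = 0"
  by (simp add: block_end_def)

lemma block_end_le_plen: "us \<noteq> [] \<Longrightarrow> block_end us i \<le> plen (catl us)"
  by (metis block_end_0 block_end_antimono zero_le)

lemma nth_eq_subpath_catl:
  assumes "composable_chain Q us" "i < length us"
  shows "us ! i = subpath Q (catl us) (block_end us (Suc i)) (block_end us i)"
  using assms
proof (induction us arbitrary: i)
  case (Cons u us)
  show ?case
  proof (cases "us = []")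
    case True
    then show ?thesis using Cons.prems by (simp add: block_end_def subpath_full)
  next
    case False
    have c: "composable Q u (catl us)" by (rule composable_catl[OF Cons.prems(1) False])
    show ?thesis
    proof (cases i)
      case 0
      have "block_end (u # us) 1 = plen (catl us)" "block_end (u # us) 0 = plen (catl us) + plen u"
        using False by (simp_all add: block_end_def plen_catl)
      then show ?thesis using 0 subpath_cat_suffix[OF c] False by (simp add: catl_Cons)
    next
      case (Suc k)
      then have "us ! k = subpath Q (catl us) (block_end us (Suc k)) (block_end us k)"
        using Cons.IH[OF composable_chain_Cons(1)[OF Cons.prems(1)]] Cons.prems(2) by simp
      also have "\<dots> = subpath Q (cat u (catl us)) (block_end us (Suc k)) (block_end us k)"
        using subpath_cat_prefix[of "block_end us (Suc k)" "block_end us k" "catl us" Q u]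
          block_end_le_plen[OF False] block_end_antimono[of k "Suc k" us] by simp
      finally show ?thesis using Suc False by (simp add: catl_Cons block_end_def)
    qed
  qed
qed simp

lemma catl_consecutive_subpaths:
  assumes mono: "\<And>k. a \<le> k \<Longrightarrow> k < b \<Longrightarrow> S k \<le> S (Suc k)" and Sb: "S b \<le> plen q" and ab: "a < b"
  shows "catl (rev (map (\<lambda>k. subpath Q q (S k) (S (Suc k))) [a..<b])) = subpath Q q (S a) (S b)"
  using ab mono Sb
proof (induction b)
  case (Suc b)
  show ?case
  proof (cases "a = b")
    case False
    then have ab: "a < b" using Suc by simp
    have "S a \<le> S b"
      using less_imp_le[OF ab]
    proof (induction b rule: dec_induct)
      case (step m)
      then show ?case using Suc.prems(2)[of m] ab by (metis le_trans less_SucI)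
    qed simp
    moreover have "S b \<le> plen q" using Suc.prems(2)[of b] Suc.prems(3) ab by simp
    ultimately show ?thesis
      using Suc.IH[OF ab] Suc.prems(2,3) ab cat_subpath[of "S a" "S b" "S (Suc b)" q Q]
      by (simp add: catl_Cons)
  qed simp
qed simp

lemma inI_subpath_mono:
  assumes "inI Q (subpath Q q a b)" "c \<le> a" "a \<le> b" "b \<le> d" "d \<le> plen q"
  shows "inI Q (subpath Q q c d)"
proof -
  obtain i j where ij: "i \<le> j" "j \<le> b - a" "subpath Q (subpath Q q a b) i j \<in> rels Q"
    using assms unfolding inI_def by (auto simp: plen_subpath)
  have "subpath Q (subpath Q q a b) i j = subpath Q (subpath Q q c d) (a - c + i) (a - c + j)"
    using subpath_subpath[of a b q i j Q] subpath_subpath[of c d q "a - c + i" "a - c + j" Q]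
      assms ij by simp
  then show ?thesis
    unfolding inI_def
  proof (intro exI conjI)
    show "a - c + i \<le> a - c + j" "a - c + j \<le> plen (subpath Q q c d)"
      using ij assms by (simp_all add: plen_subpath)
  qed (use ij in simp)
qed

lemma inI_plen_ge_2:
  assumes "monomial_quiver Q" "inI Q p"
  shows "plen p \<ge> 2"
proof -
  obtain i j where "i \<le> j" "j \<le> plen p" "subpath Q p i j \<in> rels Q" using assms unfolding inI_def by blast
  moreover have "plen (subpath Q p i j) \<le> plen p" by (simp add: subpath_def plen_def)
  ultimately show ?thesis using assms unfolding monomial_quiver_def by fastforce
qed

subsection \<open>Left and right positions of an ambiguity\<close>

text \<open>Positions are counted along a path of length \<open>L\<close>, and \<open>R a b\<close> states that the
  piece between positions a and b lies in the ideal.  A left n-ambiguity is determined by the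
  boundaries \<open>T 0 \<le> \<dots> \<le> T (Suc n)\<close> of its blocks \<open>u\<^sub>n, \<dots>, u\<^sub>0\<close>, and a right one by
  the boundaries \<open>S 0 \<le> \<dots> \<le> S (Suc n)\<close> of \<open>v\<^sub>0, \<dots>, v\<^sub>n\<close>.\<close>
definition left_positions :: "(nat \<Rightarrow> nat \<Rightarrow> bool) \<Rightarrow> nat \<Rightarrow> nat \<Rightarrow> (nat \<Rightarrow> nat) \<Rightarrow> bool" where
  "left_positions R L n T \<longleftrightarrow>
     T 0 = 0 \<and> Suc (T n) = L \<and> T (Suc n) = L \<and> (\<forall>i\<le>n. T i \<le> T (Suc i)) \<and>
     (\<forall>i<n. R (T i) (T (Suc (Suc i)))) \<and>
     (\<forall>i s. i < n \<longrightarrow> T i < s \<longrightarrow> s \<le> T (Suc (Suc i)) \<longrightarrow> \<not> R s (T (Suc (Suc i)))) \<and>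
     (\<forall>i\<le>n. \<not> R (T i) (T (Suc i)))"

definition right_positions :: "(nat \<Rightarrow> nat \<Rightarrow> bool) \<Rightarrow> nat \<Rightarrow> nat \<Rightarrow> (nat \<Rightarrow> nat) \<Rightarrow> bool" where
  "right_positions R L n S \<longleftrightarrow>
     S 0 = 0 \<and> S 1 = 1 \<and> S (Suc n) = L \<and> (\<forall>k\<le>n. S k \<le> S (Suc k)) \<and>
     (\<forall>k<n. R (S k) (S (Suc (Suc k)))) \<and>
     (\<forall>k e. k < n \<longrightarrow> e < S (Suc (Suc k)) \<longrightarrow> \<not> R (S k) e) \<and>
     (\<forall>k\<le>n. \<not> R (S k) (S (Suc k)))"

definition widening_closed :: "(nat \<Rightarrow> nat \<Rightarrow> bool) \<Rightarrow> nat \<Rightarrow> bool" where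
  "widening_closed R L \<longleftrightarrow> (\<forall>a b c d. R a b \<longrightarrow> c \<le> a \<longrightarrow> b \<le> d \<longrightarrow> d \<le> L \<longrightarrow> R c d)"

lemma widening_closedD: "widening_closed R L \<Longrightarrow> R a b \<Longrightarrow> c \<le> a \<Longrightarrow> b \<le> d \<Longrightarrow> d \<le> L \<Longrightarrow> R c d"
  unfolding widening_closed_def by blast

fun greedy_positions :: "(nat \<Rightarrow> nat \<Rightarrow> bool) \<Rightarrow> nat \<Rightarrow> nat" where
  "greedy_positions R 0 = 0"
| "greedy_positions R (Suc 0) = 1"
| "greedy_positions R (Suc (Suc k)) = (LEAST e. R (greedy_positions R k) e)"

lemma left_positionsD:
  assumes "left_positions R L n T"
  shows "T 0 = 0" and "Suc (T n) = L" and "T (Suc n) = L"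
    and "\<And>i. i \<le> n \<Longrightarrow> T i \<le> T (Suc i)"
    and "\<And>i. i < n \<Longrightarrow> R (T i) (T (Suc (Suc i)))"
    and "\<And>i s. i < n \<Longrightarrow> T i < s \<Longrightarrow> s \<le> T (Suc (Suc i)) \<Longrightarrow> \<not> R s (T (Suc (Suc i)))"
    and "\<And>i. i \<le> n \<Longrightarrow> \<not> R (T i) (T (Suc i))"
  using assms unfolding left_positions_def by blast+

lemma right_positionsD:
  assumes "right_positions R L n S"
  shows "S 0 = 0" and "S 1 = 1" and "S (Suc n) = L"
    and "\<And>k. k \<le> n \<Longrightarrow> S k \<le> S (Suc k)"
    and "\<And>k. k < n \<Longrightarrow> R (S k) (S (Suc (Suc k)))"
    and "\<And>k e. k < n \<Longrightarrow> e < S (Suc (Suc k)) \<Longrightarrow> \<not> R (S k) e"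
    and "\<And>k. k \<le> n \<Longrightarrow> \<not> R (S k) (S (Suc k))"
  using assms unfolding right_positions_def by blast+

lemma Suc_mono_le_upto:
  fixes f :: "nat \<Rightarrow> nat"
  assumes "\<And>k. k < m \<Longrightarrow> f k \<le> f (Suc k)" "i \<le> j" "j \<le> m"
  shows "f i \<le> f j"
  using assms(2,3)
proof (induction j rule: dec_induct)
  case (step k)
  then show ?case using assms(1)[of k] by simp
qed simp

lemma left_positions_mono:
  "left_positions R L n T \<Longrightarrow> i \<le> j \<Longrightarrow> j \<le> Suc n \<Longrightarrow> T i \<le> T j"
  using Suc_mono_le_upto[of "Suc n" T] left_positionsD(4) by (metis less_Suc_eq_le)

lemma left_positions_le_length:
  assumes "left_positions R L n T" "i \<le> Suc n"
  shows "T i \<le> L"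
  using left_positions_mono[OF assms order_refl] left_positionsD(3)[OF assms(1)] by simp

lemma left_positions_unique:
  assumes T: "left_positions R L n T" and T': "left_positions R L n T'" and j: "j \<le> Suc n"
  shows "T j = T' j"
  using j
proof (induction "Suc n - j" arbitrary: j rule: less_induct)
  case less
  show ?case
  proof (cases "n \<le> j")
    case True
    then have "j = n \<or> j = Suc n" using less.prems by auto
    then show ?thesis using left_positionsD(2,3)[OF T] left_positionsD(2,3)[OF T'] by auto
  next
    case False
    let ?t = "T (Suc (Suc j))"
    have t: "T' (Suc (Suc j)) = ?t" using less.hyps[of "Suc (Suc j)"] False by simp
    have "T j \<le> ?t" "T' j \<le> ?t"
      using left_positions_mono[OF T, of j "Suc (Suc j)"] left_positions_mono[OF T', of j "Suc (Suc j)"]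
        False t by simp_all
    moreover have "R (T j) ?t" "R (T' j) ?t"
      using left_positionsD(5)[OF T, of j] left_positionsD(5)[OF T', of j] False t by simp_all
    ultimately show ?thesis
      using left_positionsD(6)[OF T, of j] left_positionsD(6)[OF T', of j] False t
      by (metis linorder_neqE_nat not_le)
  qed
qed

lemma right_positions_eq_greedy:
  assumes S: "right_positions R L n S" and k: "k \<le> Suc n"
  shows "S k = greedy_positions R k"
  using k
proof (induction k rule: less_induct)
  case (less k)
  consider "k = 0" | "k = 1" | j where "k = Suc (Suc j)"
    by (metis One_nat_def not0_implies_Suc)
  then show ?case
  proof cases
    case 3
    then have j: "j < n" using less.prems by simp
    have "S (Suc (Suc j)) = (LEAST e. R (S j) e)"
      using right_positionsD(5,6)[OF S j]
      by (metis (mono_tags, lifting) LeastI Least_le not_less order_antisym)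
    then show ?thesis using less.IH[of j] 3 less.prems by simp
  qed (use right_positionsD(1,2)[OF S] in simp_all)
qed

lemma greedy_positions_interlace:
  assumes wc: "widening_closed R L"
    and n: "n \<ge> 1" and T: "left_positions R L n T"
    and k: "0 < k" "k \<le> Suc n"
  shows "T (k - 1) < greedy_positions R k \<and> greedy_positions R k \<le> T k"
  using k
proof (induction k rule: less_induct)
  case (less k)
  let ?S = "greedy_positions R"
  note TD = left_positionsD[OF T]
  consider "k = 1" | j where "k = Suc (Suc j)" using less.prems by (metis One_nat_def gr0_implies_Suc not0_implies_Suc)
  then show ?case
  proof cases
    case 1
    have "R (T 0) (T 2)" "\<not> R (T 1) (T 2)" using TD(5)[of 0] TD(7)[of 1] n by (simp_all add: numeral_2_eq_2)
    then have "T 1 \<noteq> 0" using TD(1) by (metis One_nat_def)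
    then show ?thesis using 1 TD(1) by simp
  next
    case 2
    then have j: "j < n" using less.prems by simp
    have TL: "T i \<le> L" if "i \<le> Suc n" for i using left_positions_le_length[OF T that] .
    have Sj: "?S j \<le> T j"
      using less.IH[of j] 2 j TD(1) by (cases j) auto
    have ex: "R (?S j) (T (Suc (Suc j)))"
      using widening_closedD[OF wc TD(5)[OF j] Sj order_refl TL] j by simp
    have up: "?S (Suc (Suc j)) \<le> T (Suc (Suc j))" using ex by (simp add: Least_le)
    have "T (Suc j) < ?S (Suc (Suc j))"
    proof (rule ccontr)
      assume "\<not> T (Suc j) < ?S (Suc (Suc j))"
      moreover have "R (?S j) (?S (Suc (Suc j)))" using ex by (simp add: LeastI)
      ultimately have r: "R (?S j) (T (Suc j))"
        using widening_closedD[OF wc] TL[of "Suc j"] j by simp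
      show False
      proof (cases j)
        case 0
        then show False using r TD(1) TD(7)[of 0] by simp
      next
        case (Suc j')
        have "T j' < ?S j" using less.IH[of j] Suc 2 j by simp
        moreover have "?S j \<le> T (Suc j)" using Sj TD(4)[of j] j by simp
        ultimately show False using r TD(6)[of j'] Suc j by simp
      qed
    qed
    then show ?thesis using up 2 by simp
  qed
qed

lemma right_positions_greedy:
  assumes wc: "widening_closed R L"
    and n: "n \<ge> 1" and T: "left_positions R L n T"
  shows "right_positions R L n (greedy_positions R)"
proof -
  let ?S = "greedy_positions R"
  note TD = left_positionsD[OF T]
  have between: "T (k - 1) < ?S k \<and> ?S k \<le> T k" if "0 < k" "k \<le> Suc n" for k
    using greedy_positions_interlace[OF wc n T that] by blast
  have S_le_T: "?S k \<le> T k" if "k \<le> Suc n" for k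
    using between[of k] that TD(1) by (cases k) auto
  have SL: "?S (Suc n) = L" using between[of "Suc n"] TD(2,3) by simp
  have Sinc: "?S k < ?S (Suc k)" if "k \<le> n" for k
    using S_le_T[of k] between[of "Suc k"] that by simp
  have ex: "R (?S k) (T (Suc (Suc k)))" if "k < n" for k
    using widening_closedD[OF wc TD(5)[OF that] S_le_T order_refl left_positions_le_length[OF T]] that
    by simp
  have SR: "R (?S k) (?S (Suc (Suc k)))" if "k < n" for k
    using LeastI[of "R (?S k)", OF ex[OF that]] by simp
  have Smin: "\<not> R (?S k) e" if "e < ?S (Suc (Suc k))" for k e
    using not_less_Least[of e "R (?S k)"] that by simp
  have SB: "\<not> R (?S k) (?S (Suc k))" if "k \<le> n" for k
  proof (cases "k < n")
    case True
    then show ?thesis using Smin Sinc[of "Suc k"] by simp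
  next
    case False
    then have "k = n" using that by simp
    obtain n' where n': "n = Suc n'" using n by (cases n) auto
    then have "T n' < ?S n" "?S n \<le> T (Suc (Suc n'))"
      using between[of n] S_le_T[of "Suc n"] TD(4)[of n] by auto
    then show ?thesis using TD(6)[of n' "?S n"] TD(3) SL n' \<open>k = n\<close> by simp
  qed
  show ?thesis
    unfolding right_positions_def using SL SR Smin SB Sinc by (auto intro: less_imp_le)
qed

subsection \<open>Left and right decompositions of ambiguities\<close>

abbreviation ideal_piece :: "('v,'a) mquiver \<Rightarrow> ('v,'a) path \<Rightarrow> nat \<Rightarrow> nat \<Rightarrow> bool" where
  "ideal_piece Q q \<equiv> \<lambda>a b. inI Q (subpath Q q a b)"

lemma widening_closed_ideal_piece:
  assumes "monomial_quiver Q"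
  shows "widening_closed (ideal_piece Q q) (plen q)"
  unfolding widening_closed_def
proof (intro allI impI)
  fix a b c d assume h: "inI Q (subpath Q q a b)" "c \<le> a" "b \<le> d" "d \<le> plen q"
  have "a \<le> b"
    using inI_plen_ge_2[OF assms h(1)] by (rule contrapos_pp) (simp add: subpath_def plen_def)
  then show "inI Q (subpath Q q c d)" using inI_subpath_mono h by blast
qed

lemma left_decD:
  assumes "left_dec Q n q us"
  shows "length us = Suc n" and "plen (us ! 0) = 1" and "\<And>i. i \<le> n \<Longrightarrow> us ! i \<in> basis Q"
    and "\<And>i. i < n \<Longrightarrow> inI Q (cat (us ! i) (us ! Suc i))"
    and "\<And>i k. i < n \<Longrightarrow> 0 < k \<Longrightarrow> k \<le> plen (cat (us ! i) (us ! Suc i)) \<Longrightarrow>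
           \<not> inI Q (subpath Q (cat (us ! i) (us ! Suc i)) k (plen (cat (us ! i) (us ! Suc i))))"
    and "composable_chain Q us" and "q = catl us"
  using assms unfolding left_dec_def composable_chain_def by auto

lemma right_decD:
  assumes "right_dec Q n q vs"
  shows "length vs = Suc n" and "plen (vs ! 0) = 1" and "\<And>i. i \<le> n \<Longrightarrow> vs ! i \<in> basis Q"
    and "\<And>i. i < n \<Longrightarrow> composable Q (vs ! Suc i) (vs ! i)"
    and "\<And>i. i < n \<Longrightarrow> inI Q (cat (vs ! Suc i) (vs ! i))"
    and "\<And>i k. i < n \<Longrightarrow> k < plen (cat (vs ! Suc i) (vs ! i)) \<Longrightarrow>
           \<not> inI Q (subpath Q (cat (vs ! Suc i) (vs ! i)) 0 k)"
    and "q = catl (rev vs)"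
  using assms unfolding right_dec_def by blast+

lemma left_dec_block:
  assumes "left_dec Q n q us" "i \<le> n"
  shows "us ! i = subpath Q q (block_end us (Suc i)) (block_end us i)"
  using nth_eq_subpath_catl[OF left_decD(6)[OF assms(1)]] left_decD(1,7)[OF assms(1)] assms(2)
  by simp

lemma left_dec_adjacent_blocks:
  assumes ld: "left_dec Q n q us" and k: "k < n"
  shows "cat (us ! k) (us ! Suc k) = subpath Q q (block_end us (Suc (Suc k))) (block_end us k)"
proof -
  have "us \<noteq> []" using left_decD(1)[OF ld] by auto
  then have "block_end us k \<le> plen q" using block_end_le_plen left_decD(7)[OF ld] by simp
  then show ?thesis
    using left_dec_block[OF ld, of k] left_dec_block[OF ld, of "Suc k"] k
      cat_subpath[of "block_end us (Suc (Suc k))" "block_end us (Suc k)" "block_end us k" q Q]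
      block_end_antimono[of k "Suc k" us] block_end_antimono[of "Suc k" "Suc (Suc k)" us]
    by simp
qed

lemma left_dec_overlap_minimal:
  assumes ld: "left_dec Q n q us" and k: "k < n"
    and s: "block_end us (Suc (Suc k)) < s" "s \<le> block_end us k"
  shows "\<not> inI Q (subpath Q q s (block_end us k))"
proof -
  let ?E = "block_end us" and ?c = "cat (us ! k) (us ! Suc k)"
  have "us \<noteq> []" using left_decD(1)[OF ld] by auto
  then have Eb: "?E k \<le> plen q" using block_end_le_plen left_decD(7)[OF ld] by simp
  have pc: "plen ?c = ?E k - ?E (Suc (Suc k))"
    using left_dec_adjacent_blocks[OF ld k] Eb by (simp add: plen_subpath)
  have "subpath Q ?c (s - ?E (Suc (Suc k))) (plen ?c) = subpath Q q s (?E k)"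
    using left_dec_adjacent_blocks[OF ld k] s pc Eb
      subpath_subpath[of "?E (Suc (Suc k))" "?E k" q "s - ?E (Suc (Suc k))" "plen ?c" Q]
    by simp
  then show ?thesis using left_decD(5)[OF ld k, of "s - ?E (Suc (Suc k))"] s pc by simp
qed

lemma left_dec_left_positions:
  assumes ld: "left_dec Q n q us"
  shows "left_positions (ideal_piece Q q) (plen q) n (\<lambda>j. block_end us (Suc n - j))"
proof -
  let ?E = "block_end us"
  note D = left_decD[OF ld]
  have ne: "us \<noteq> []" using D(1) by auto
  have E0: "?E 0 = plen q" using block_end_0[OF ne] D(7) by simp
  have E1: "?E 0 = Suc (?E 1)" using block_end_Suc[of 0 us] D(1,2) by simp
  have En: "?E (Suc n) = 0" using block_end_length[of us] D(1) by simp
  have lR: "inI Q (subpath Q q (?E (Suc (Suc k))) (?E k))" if "k < n" for k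
    using D(4)[OF that] left_dec_adjacent_blocks[OF ld that] by simp
  have lB: "\<not> inI Q (subpath Q q (?E (Suc k)) (?E k))" if "k \<le> n" for k
    using D(3)[OF that] left_dec_block[OF ld that] by (simp add: basis_def)
  show ?thesis
    unfolding left_positions_def
  proof (intro conjI allI impI)
    fix i assume "i \<le> n"
    then have re: "Suc n - Suc i = n - i" "Suc n - i = Suc (n - i)" by auto
    show "?E (Suc n - i) \<le> ?E (Suc n - Suc i)" using block_end_antimono[of "n - i" "Suc (n - i)" us] re by simp
    show "\<not> inI Q (subpath Q q (?E (Suc n - i)) (?E (Suc n - Suc i)))" using lB[of "n - i"] re by simp
  next
    fix i assume "i < n"
    then have re: "Suc n - i = Suc (Suc (n - Suc i))" "Suc n - Suc (Suc i) = n - Suc i" "n - Suc i < n"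
      by auto
    show "inI Q (subpath Q q (?E (Suc n - i)) (?E (Suc n - Suc (Suc i))))"
      using lR[of "n - Suc i"] re by simp
    fix s assume "?E (Suc n - i) < s" "s \<le> ?E (Suc n - Suc (Suc i))"
    then show "\<not> inI Q (subpath Q q s (?E (Suc n - Suc (Suc i))))" using left_dec_overlap_minimal[OF ld, of "n - Suc i" s] re by simp
  qed (use E0 E1 En in simp_all)
qed

lemma left_dec_unique:
  assumes ld: "left_dec Q n q us" and ld': "left_dec Q n q us'"
  shows "us = us'"
proof (rule nth_equalityI)
  show "length us = length us'" using left_decD(1)[OF ld] left_decD(1)[OF ld'] by simp
  have E: "block_end us i = block_end us' i" if "i \<le> Suc n" for i
    using left_positions_unique[OF left_dec_left_positions[OF ld] left_dec_left_positions[OF ld'],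
        of "Suc n - i"] that by simp
  fix i assume "i < length us"
  then have "i \<le> n" using left_decD(1)[OF ld] by simp
  then show "us ! i = us' ! i"
    using left_dec_block[OF ld] left_dec_block[OF ld'] E[of i] E[of "Suc i"] by simp
qed

lemma right_dec_block:
  assumes rd: "right_dec Q n q vs" and k: "k \<le> n"
  shows "vs ! k = subpath Q q (block_end (rev vs) (Suc n - k)) (block_end (rev vs) (Suc n - Suc k))"
proof -
  note D = right_decD[OF rd]
  have len: "length (rev vs) = Suc n" using D(1) by simp
  have "composable_chain Q (rev vs)"
    unfolding composable_chain_def
  proof (intro allI impI)
    fix i assume i: "Suc i < length (rev vs)"
    then have "rev vs ! i = vs ! Suc (n - Suc i)" "rev vs ! Suc i = vs ! (n - Suc i)"
      using D(1) by (auto simp: rev_nth Suc_diff_Suc)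
    then show "composable Q (rev vs ! i) (rev vs ! Suc i)" using D(4)[of "n - Suc i"] i len by simp
  qed
  then have "rev vs ! (n - k) = subpath Q q (block_end (rev vs) (Suc (n - k))) (block_end (rev vs) (n - k))"
    using nth_eq_subpath_catl[of Q "rev vs" "n - k"] D(7) len by simp
  moreover have "rev vs ! (n - k) = vs ! k" using k D(1) by (simp add: rev_nth)
  ultimately show ?thesis using k by (simp add: Suc_diff_le)
qed

lemma right_dec_right_positions:
  assumes mq: "monomial_quiver Q" and rd: "right_dec Q n q vs"
  shows "right_positions (ideal_piece Q q) (plen q) n (\<lambda>k. block_end (rev vs) (Suc n - k))"
proof -
  define S where "S = (\<lambda>k. block_end (rev vs) (Suc n - k))"
  note D = right_decD[OF rd]
  have len: "length (rev vs) = Suc n" using D(1) by simp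
  have ne: "rev vs \<noteq> []" using len by auto
  have Eb: "block_end (rev vs) i \<le> plen q" for i using block_end_le_plen[OF ne] D(7) by simp
  have Sm: "S k \<le> S (Suc k)" for k unfolding S_def by (rule block_end_antimono) simp
  have vsk: "vs ! k = subpath Q q (S k) (S (Suc k))" if "k \<le> n" for k
    using right_dec_block[OF rd that] by (simp add: S_def)
  have cat_eq: "cat (vs ! Suc k) (vs ! k) = subpath Q q (S k) (S (Suc (Suc k)))" if k: "k < n" for k
    using vsk[of k] vsk[of "Suc k"] k cat_subpath[of "S k" "S (Suc k)" "S (Suc (Suc k))" q Q] Sm[of k]
      Sm[of "Suc k"] Eb by (simp add: S_def)
  have "S 0 = 0" using block_end_length[of "rev vs"] len by (simp add: S_def)
  moreover have "S 1 = 1"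
    using block_end_Suc[of n "rev vs"] block_end_length[of "rev vs"] len D(1,2)
    by (simp add: S_def rev_nth)
  moreover have "S (Suc n) = plen q" using block_end_0[OF ne] D(7) by (simp add: S_def)
  moreover have "inI Q (subpath Q q (S k) (S (Suc (Suc k))))" if "k < n" for k
    using cat_eq[OF that] D(5)[OF that] by simp
  moreover have "\<not> inI Q (subpath Q q (S k) e)" if k: "k < n" and e: "e < S (Suc (Suc k))" for k e
  proof (cases "e < S k")
    case True
    then show ?thesis using inI_plen_ge_2[OF mq] by (fastforce simp: subpath_def plen_def)
  next
    case False
    have le: "S k \<le> S (Suc (Suc k))" "S (Suc (Suc k)) \<le> plen q"
      using Sm[of k] Sm[of "Suc k"] Eb by (auto simp: S_def)
    have pc: "plen (cat (vs ! Suc k) (vs ! k)) = S (Suc (Suc k)) - S k"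
      using cat_eq[OF k] le by (simp add: plen_subpath)
    have "subpath Q (cat (vs ! Suc k) (vs ! k)) 0 (e - S k) = subpath Q q (S k) e"
      using cat_eq[OF k] subpath_subpath[of "S k" "S (Suc (Suc k))" q 0 "e - S k" Q] le e False pc
      by simp
    then show ?thesis using D(6)[OF k, of "e - S k"] pc e False by simp
  qed
  moreover have "\<not> inI Q (subpath Q q (S k) (S (Suc k)))" if "k \<le> n" for k
    using D(3)[OF that] vsk[OF that] by (simp add: basis_def)
  ultimately show ?thesis
    unfolding right_positions_def S_def[symmetric] using Sm by blast
qed

lemma right_dec_unique:
  assumes mq: "monomial_quiver Q" and rd: "right_dec Q n q vs" and rd': "right_dec Q n q vs'"
  shows "vs = vs'"
proof (rule nth_equalityI)
  show "length vs = length vs'" using right_decD(1)[OF rd] right_decD(1)[OF rd'] by simp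
  note P = right_dec_right_positions[OF mq rd] and P' = right_dec_right_positions[OF mq rd']
  fix i assume "i < length vs"
  then have i: "i \<le> n" using right_decD(1)[OF rd] by simp
  then show "vs ! i = vs' ! i"
    using right_dec_block[OF rd i] right_dec_block[OF rd' i] right_positions_eq_greedy[OF P, of i]
      right_positions_eq_greedy[OF P', of i] right_positions_eq_greedy[OF P, of "Suc i"]
      right_positions_eq_greedy[OF P', of "Suc i"] by simp
qed

lemma right_dec_of_right_positions:
  assumes mq: "monomial_quiver Q" and vq: "valid Q q"
    and S: "right_positions (ideal_piece Q q) (plen q) n S"
  shows "right_dec Q n q (map (\<lambda>k. subpath Q q (S k) (S (Suc k))) [0..<Suc n])"
proof -
  note SD = right_positionsD[OF S]
  define vs where "vs = map (\<lambda>k. subpath Q q (S k) (S (Suc k))) [0..<Suc n]"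
  have Sm: "S i \<le> S j" if "i \<le> j" "j \<le> Suc n" for i j
    using Suc_mono_le_upto[of "Suc n" S i j] SD(4) that by simp
  have Sb: "S k \<le> plen q" if "k \<le> Suc n" for k using Sm[OF that order_refl] SD(3) by simp
  have vsk: "vs ! k = subpath Q q (S k) (S (Suc k))" if "k \<le> n" for k
    using that unfolding vs_def by (simp del: upt_Suc)
  have cat_eq: "cat (vs ! Suc i) (vs ! i) = subpath Q q (S i) (S (Suc (Suc i)))" if "i < n" for i
    using vsk[of i] vsk[of "Suc i"] that cat_subpath[of "S i" "S (Suc i)" "S (Suc (Suc i))" q Q]
      Sm[of i "Suc i"] Sm[of "Suc i" "Suc (Suc i)"] Sb[of "Suc (Suc i)"] by simp
  have "length vs = Suc n" by (simp add: vs_def)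
  moreover have "plen (vs ! 0) = 1" using vsk[of 0] SD(1,2) Sb[of 1] by (simp add: plen_subpath)
  moreover have "vs ! i \<in> basis Q" if i: "i \<le> n" for i
    using vsk[OF i] valid_subpath[OF mq vq] Sm[of i "Suc i"] Sb[of "Suc i"] SD(7)[OF i] i
    by (simp add: basis_def)
  moreover have "composable Q (vs ! Suc i) (vs ! i)" if "i < n" for i
    using vsk[of i] vsk[of "Suc i"] that Sm[of i "Suc i"] Sb[of "Suc i"]
    by (simp add: composable_def pend_subpath pstart_subpath)
  moreover have "inI Q (cat (vs ! Suc i) (vs ! i))" if "i < n" for i
    using cat_eq[OF that] SD(5)[OF that] by simp
  moreover have "\<not> inI Q (subpath Q (cat (vs ! Suc i) (vs ! i)) 0 k)"
    if i: "i < n" and k: "k < plen (cat (vs ! Suc i) (vs ! i))" for i k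
  proof -
    have le: "S i \<le> S (Suc (Suc i))" "S (Suc (Suc i)) \<le> plen q"
      using Sm[of i "Suc (Suc i)"] Sb[of "Suc (Suc i)"] i by auto
    then have "plen (cat (vs ! Suc i) (vs ! i)) = S (Suc (Suc i)) - S i"
      using cat_eq[OF i] by (simp add: plen_subpath)
    moreover have "subpath Q (cat (vs ! Suc i) (vs ! i)) 0 k = subpath Q q (S i) (S i + k)"
      using cat_eq[OF i] subpath_subpath[of "S i" "S (Suc (Suc i))" q 0 k Q] le k calculation by simp
    ultimately show ?thesis using SD(6)[OF i, of "S i + k"] k by simp
  qed
  moreover have "q = catl (rev vs)"
    using catl_consecutive_subpaths[of 0 "Suc n" S q Q] Sm Sb SD(1,3)
    by (simp add: vs_def subpath_full)
  ultimately show ?thesis unfolding right_dec_def vs_def[symmetric] by blast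
qed

lemma left_dec_valid:
  assumes ld: "left_dec Q n q us"
  shows "valid Q q"
proof -
  have "\<forall>u\<in>set us. valid Q u"
  proof
    fix u assume "u \<in> set us"
    then obtain i where "i < length us" "us ! i = u" by (auto simp: in_set_conv_nth)
    then show "valid Q u" using left_decD(1)[OF ld] left_decD(3)[OF ld, of i] by (simp add: basis_def)
  qed
  moreover have "us \<noteq> []" using left_decD(1)[OF ld] by auto
  ultimately show ?thesis using valid_catl left_decD(6,7)[OF ld] by simp
qed

lemma right_dec_exists:
  assumes mq: "monomial_quiver Q" and ld: "left_dec Q n q us" and n: "n \<ge> 1"
  shows "\<exists>vs. right_dec Q n q vs"
  using right_dec_of_right_positions[OF mq left_dec_valid[OF ld]
      right_positions_greedy[OF widening_closed_ideal_piece[OF mq] n left_dec_left_positions[OF ld]]]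
  by blast

lemma Gamma_valid: "q \<in> Gamma Q n \<Longrightarrow> valid Q q"
  unfolding Gamma_def using left_dec_valid by blast

lemma Gamma_plen_pos:
  assumes "q \<in> Gamma Q n"
  shows "plen q > 0"
proof -
  obtain us where ld: "left_dec Q n q us" using assms unfolding Gamma_def by blast
  then show ?thesis
    using left_positionsD(2)[OF left_dec_left_positions[OF ld]] by simp
qed

lemma Gamma_inI:
  assumes "q \<in> Gamma Q n" "n \<ge> 1"
  shows "inI Q q"
proof -
  obtain us where ld: "left_dec Q n q us" using assms unfolding Gamma_def by blast
  note T = left_dec_left_positions[OF ld]
  let ?T = "\<lambda>j. block_end us (Suc n - j)"
  have "inI Q (subpath Q q 0 (?T 2))"
    using left_positionsD(1)[OF T] left_positionsD(5)[OF T, of 0] assms(2) by (simp add: numeral_2_eq_2)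
  then have "inI Q (subpath Q q 0 (plen q))"
    using inI_subpath_mono[of Q q 0 _ 0 "plen q"] left_positions_le_length[OF T, of 2] assms(2)
    by simp
  then show ?thesis by (simp add: subpath_full)
qed

lemma sigma_suffix:
  assumes "q \<in> Gamma Q n" "n \<ge> 1"
  obtains w where "q = cat (sigma Q n (n - 1) q) w"
proof -
  obtain us where ld: "left_dec Q n q us" using assms unfolding Gamma_def by blast
  have "(THE us. left_dec Q n q us) = us" using ld left_dec_unique by blast
  then have S: "sigma Q n (n - 1) q = catl (take n us)" using assms(2) by (simp add: sigma_def)
  have "us = take n us @ [us ! n]" "take n us \<noteq> []"
    using left_decD(1)[OF ld] assms(2) by (auto simp: take_Suc_conv_app_nth[symmetric])
  then have "q = cat (catl (take n us)) (us ! n)"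
    using catl_append[of "take n us" "[us ! n]"] left_decD(7)[OF ld] by simp
  then show ?thesis using S that by simp
qed

lemma pi_prefix:
  assumes mq: "monomial_quiver Q" and "q \<in> Gamma Q n" "n \<ge> 1"
  obtains w where "q = cat w (pi Q n (n - 1) q)"
proof -
  obtain us where ld: "left_dec Q n q us" using assms unfolding Gamma_def by blast
  obtain vs where rd: "right_dec Q n q vs" using right_dec_exists[OF mq ld assms(3)] by blast
  have "(THE vs. right_dec Q n q vs) = vs" using rd right_dec_unique[OF mq] by blast
  then have P: "pi Q n (n - 1) q = catl (rev (take n vs))" using assms(3) by (simp add: pi_def)
  have "rev vs = vs ! n # rev (take n vs)" "rev (take n vs) \<noteq> []"
    using right_decD(1)[OF rd] assms(3)
    by (auto simp: take_Suc_conv_app_nth[symmetric] simp flip: rev.simps(2))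
  then have "q = cat (vs ! n) (catl (rev (take n vs)))"
    using catl_Cons right_decD(7)[OF rd] by metis
  then show ?thesis using P that by simp
qed

subsection \<open>The coboundary respects arrow differences\<close>

definition arrow_diff :: "('v,'a) path \<times> ('v,'a) path \<Rightarrow> 'a set \<times> 'a set" where
  "arrow_diff s = (set (snd (fst s)) - set (snd (snd s)), set (snd (snd s)) - set (snd (fst s)))"

lemma hat_restrict_arrow_diff:
  assumes q: "snd (cat c (cat p a)) = snd q" and dq: "distinct (snd q)" and dr: "distinct (snd r)"
  shows "hat Q (\<lambda>s. if arrow_diff s = K then f s else 0) c p a r =
         (if arrow_diff (q, r) = K then hat Q f c p a r else 0)"
proof -
  have "arrow_diff (q, r) = arrow_diff (p, b)" if "cat c (cat b a) = r" for b
  proof -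
    have "snd q = snd a @ snd p @ snd c" "snd r = snd a @ snd b @ snd c"
      using q that by (auto simp: cat_def)
    then show ?thesis using dq dr by (auto simp: arrow_diff_def)
  qed
  then show ?thesis
    unfolding hat_def by (cases "arrow_diff (q, r) = K") (auto intro!: sum.neutral sum.cong)
qed

lemma cobound_outside:
  assumes "\<not> (q \<in> Gamma Q N \<and> r \<in> basis Q \<and> parallel Q q r)"
  shows "cobound Q N f (q, r) = 0"
  unfolding cobound_def prod.case using assms by (rule if_not_P)

lemma cobound_odd:
  assumes "q \<in> Gamma Q N \<and> r \<in> basis Q \<and> parallel Q q r" "odd N"
  shows "cobound Q N f (q, r) = (\<Sum>(i, j)\<in>{(i, j). i \<le> j \<and> j \<le> plen q}.
             if subpath Q q i j \<in> Gamma Q (N - 1)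
             then hat Q f (subpath Q q j (plen q)) (subpath Q q i j) (subpath Q q 0 i) r
             else 0)"
  using assms unfolding cobound_def by simp

lemma cobound_even:
  assumes "q \<in> Gamma Q N \<and> r \<in> basis Q \<and> parallel Q q r" "even N"
  shows "cobound Q N f (q, r) =
      hat Q f (subpath Q q (plen (pi Q N (N - 1) q)) (plen q)) (pi Q N (N - 1) q) (subpath Q q 0 0) r
    - hat Q f (subpath Q q (plen q) (plen q)) (sigma Q N (N - 1) q)
        (subpath Q q 0 (plen q - plen (sigma Q N (N - 1) q))) r"
  using assms unfolding cobound_def Let_def by simp

lemma cobound_restrict_arrow_diff:
  assumes mq: "monomial_quiver Q" and tr: "triangular Q" and N: "N \<ge> 1"
  shows "cobound Q N (\<lambda>s. if arrow_diff s = K then f s else 0) (q, r) =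
         (if arrow_diff (q, r) = K then cobound Q N f (q, r) else 0)"
proof (cases "q \<in> Gamma Q N \<and> r \<in> basis Q \<and> parallel Q q r")
  case False
  then show ?thesis by (simp add: cobound_outside)
next
  case G: True
  have dq: "distinct (snd q)" using triangular_distinct_arrows[OF tr mq Gamma_valid] G by blast
  have dr: "distinct (snd r)" using triangular_distinct_arrows[OF tr mq] G by (simp add: basis_def)
  note restrict = hat_restrict_arrow_diff[OF _ dq dr, where Q = Q and K = K and f = f]
  show ?thesis
  proof (cases "odd N")
    case True
    then show ?thesis
      unfolding cobound_odd[OF G True]
      using restrict[OF snd_subpath_split3]
      by (cases "arrow_diff (q, r) = K") (auto intro!: sum.neutral sum.cong)
  next
    case False
    then have even: "even N" by simp
    let ?P = "pi Q N (N - 1) q" and ?S = "sigma Q N (N - 1) q"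
    obtain w where w: "q = cat w ?P" using pi_prefix[OF mq _ N] G by blast
    obtain w' where w': "q = cat ?S w'" using sigma_suffix[OF _ N] G by blast
    have "snd (cat (subpath Q q (plen ?P) (plen q)) (cat ?P (subpath Q q 0 0))) = snd q"
      using arg_cong[OF w, of snd] by (simp add: cat_def subpath_def plen_def)
    moreover have "snd (cat (subpath Q q (plen q) (plen q)) (cat ?S (subpath Q q 0 (plen q - plen ?S)))) = snd q"
      using arg_cong[OF w', of snd] by (simp add: cat_def subpath_def plen_def)
    ultimately show ?thesis
      unfolding cobound_even[OF G even] using restrict by simp
  qed
qed

lemma irreducible_cocycleD:
  fixes x :: "('v,'a,'k::comm_ring_1) cochain"
  assumes "irreducible_cocycle Q n x"
  shows "is_cochain Q n x" and "cobound Q (Suc n) x = (\<lambda>_. 0)"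
    and "\<And>S (\<beta> :: ('v,'a) path \<times> ('v,'a) path \<Rightarrow> 'k). S \<subset> {s. x s \<noteq> 0} \<Longrightarrow> S \<noteq> {} \<Longrightarrow>
           \<forall>s\<in>S. \<beta> s \<noteq> 0 \<Longrightarrow> cobound Q (Suc n) (\<lambda>s. if s \<in> S then \<beta> s else 0) \<noteq> (\<lambda>_. 0)"
  using assms unfolding irreducible_cocycle_def by blast+

lemma is_cochain_support:
  assumes "is_cochain Q n x" "x s \<noteq> 0"
  shows "fst s \<in> Gamma Q n" and "snd s \<in> basis Q" and "parallel Q (fst s) (snd s)"
  using assms unfolding is_cochain_def by (metis prod.collapse)+

lemma irreducible_cocycle_sub_cocycle:
  assumes irr: "irreducible_cocycle Q n x"
    and S: "u \<in> S" "S \<subseteq> {s. x s \<noteq> 0}"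
    and cocycle: "cobound Q (Suc n) (\<lambda>s. if s \<in> S then x s else 0) = (\<lambda>_. 0)"
  shows "S = {s. x s \<noteq> 0}"
  using irreducible_cocycleD(3)[OF irr, of S x] S cocycle by blast

text \<open>Restricting to one value of the arrow difference gives a cocycle, by
  \<open>cobound_restrict_arrow_diff\<close>; irreducibility then forces it to be the whole cocycle.\<close>
lemma irreducible_cocycle_arrow_diff_eq:
  fixes Q :: "('v,'a) mquiver" and x :: "('v,'a,'k::comm_ring_1) cochain"
  assumes mq: "monomial_quiver Q" and tr: "triangular Q" and irr: "irreducible_cocycle Q n x"
    and u: "x u \<noteq> 0" and v: "x v \<noteq> 0"
  shows "arrow_diff v = arrow_diff u"
proof -
  let ?S = "{s. x s \<noteq> 0 \<and> arrow_diff s = arrow_diff u}"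
  have "(\<lambda>s. if s \<in> ?S then x s else 0) = (\<lambda>s. if arrow_diff s = arrow_diff u then x s else 0)"
    by auto
  moreover have "cobound Q (Suc n) (\<lambda>s. if arrow_diff s = arrow_diff u then x s else 0) = (\<lambda>_. 0)"
  proof
    fix qr :: "('v,'a) path \<times> ('v,'a) path"
    obtain q r where "qr = (q, r)" by (cases qr)
    then show "cobound Q (Suc n) (\<lambda>s. if arrow_diff s = arrow_diff u then x s else 0) qr = 0"
      using cobound_restrict_arrow_diff[OF mq tr, of "Suc n" "arrow_diff u" x q r]
        irreducible_cocycleD(2)[OF irr] by simp
  qed
  ultimately have "cobound Q (Suc n) (\<lambda>s. if s \<in> ?S then x s else 0) = (\<lambda>_. 0)" by simp
  then have "?S = {s. x s \<noteq> 0}"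
    by (rule irreducible_cocycle_sub_cocycle[OF irr, rotated 2]) (use u in auto)
  then show ?thesis using v by (metis (mono_tags, lifting) mem_Collect_eq)
qed

text \<open>A term (q||r) of a coboundary has q in the ideal and r outside, so q and r differ;
  being parallel paths of a triangular quiver, they then use different sets of arrows.\<close>
lemma cobound_trivial_arrow_diff:
  fixes g :: "('v,'a,'k::comm_ring_1) cochain"
  assumes mq: "monomial_quiver Q" and tr: "triangular Q"
    and g: "\<And>s. g s \<noteq> 0 \<Longrightarrow> arrow_diff s = ({}, {})"
  shows "cobound Q (Suc n) g = (\<lambda>_. 0)"
proof
  fix qr :: "('v,'a) path \<times> ('v,'a) path"
  obtain q r where qr: "qr = (q, r)" by (cases qr)
  have "arrow_diff (q, r) \<noteq> ({}, {})" if G: "q \<in> Gamma Q (Suc n)" "r \<in> basis Q" "parallel Q q r"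
  proof
    assume "arrow_diff (q, r) = ({}, {})"
    then have "set (snd q) = set (snd r)" unfolding arrow_diff_def by auto
    moreover have "fst q = fst r" using G(3) by (simp add: parallel_def pstart_def)
    moreover have "valid Q (fst q, snd q)" "valid Q (fst r, snd r)"
      using Gamma_valid[OF G(1)] G(2) by (simp_all add: basis_def)
    ultimately have "q = r"
      using triangular_path_eq_if_same_arrows[OF tr mq] by (simp add: prod_eq_iff)
    then show False using Gamma_inI[OF G(1)] G(2) by (simp add: basis_def)
  qed
  moreover have "(\<lambda>s. if arrow_diff s = ({}, {}) then g s else 0) = g"
    by (intro ext) (metis g)
  then have "cobound Q (Suc n) g (q, r) =
      (if arrow_diff (q, r) = ({}, {}) then cobound Q (Suc n) g (q, r) else 0)"
    using cobound_restrict_arrow_diff[OF mq tr, of "Suc n" "({}, {})" g q r] by simp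
  ultimately show "cobound Q (Suc n) g qr = 0"
    using cobound_outside[of q Q "Suc n" r g] qr by (cases "arrow_diff (q, r) = ({}, {})") auto
qed

lemma irreducible_cocycle_trivial_arrow_diff:
  fixes Q :: "('v,'a) mquiver" and x :: "('v,'a,'k::comm_ring_1) cochain"
  assumes mq: "monomial_quiver Q" and tr: "triangular Q" and irr: "irreducible_cocycle Q n x"
    and u: "x u \<noteq> 0" "arrow_diff u = ({}, {})" and v: "x v \<noteq> 0"
  shows "v = u"
proof -
  have "cobound Q (Suc n) (\<lambda>s. if s \<in> {u} then x s else 0) = (\<lambda>_. 0)"
  proof (rule cobound_trivial_arrow_diff[OF mq tr])
    fix s assume "(if s \<in> {u} then x s else 0) \<noteq> 0"
    then have "s = u" by (simp split: if_split_asm)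
    then show "arrow_diff s = ({}, {})" using u(2) by simp
  qed
  then have "{u} = {s. x s \<noteq> 0}"
    by (rule irreducible_cocycle_sub_cocycle[OF irr, rotated 2]) (use u in auto)
  then have "v \<in> {u}" using v by simp
  then show ?thesis by simp
qed

lemma irreducible_cocycle_reach1:
  fixes Q :: "('v,'a) mquiver" and x :: "('v,'a,'k::comm_ring_1) cochain"
  assumes mq: "monomial_quiver Q" and tr: "triangular Q" and irr: "irreducible_cocycle Q n x"
    and u: "x u \<noteq> 0" and v: "x v \<noteq> 0"
  shows "reach1 Q (pstart (fst u)) (pend Q (fst v))"
proof (cases "arrow_diff u = ({}, {})")
  case True
  note supp = is_cochain_support(1)[OF irreducible_cocycleD(1)[OF irr] u]
  have "v = u" using irreducible_cocycle_trivial_arrow_diff[OF mq tr irr u True v] .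
  then show ?thesis
    unfolding reach1_def using Gamma_valid[OF supp] Gamma_plen_pos[OF supp]
    by (intro exI[of _ "fst u"]) simp
next
  case False
  note supp = is_cochain_support[OF irreducible_cocycleD(1)[OF irr]]
  obtain \<alpha> where "\<alpha> \<in> fst (arrow_diff u) \<or> \<alpha> \<in> snd (arrow_diff u)"
    using False by (cases "arrow_diff u") auto
  then consider "\<alpha> \<in> set (snd (fst u))" "\<alpha> \<in> set (snd (fst v))"
    | "\<alpha> \<in> set (snd (snd u))" "\<alpha> \<in> set (snd (snd v))"
    using irreducible_cocycle_arrow_diff_eq[OF mq tr irr u v] unfolding arrow_diff_def by auto
  then show ?thesis
  proof cases
    case 1
    then show ?thesis
      by (rule reach1_through_common_arrow[OF mq Gamma_valid[OF supp(1)[OF u]] Gamma_valid[OF supp(1)[OF v]]])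
  next
    case 2
    have "valid Q (snd u)" "valid Q (snd v)" using supp(2)[OF u] supp(2)[OF v] by (simp_all add: basis_def)
    then have "reach1 Q (pstart (snd u)) (pend Q (snd v))" using reach1_through_common_arrow[OF mq] 2 by simp
    then show ?thesis using supp(3)[OF u] supp(3)[OF v] by (simp add: parallel_def)
  qed
qed

subsection \<open>Cup products\<close>

lemma cup_nonzero_term:
  fixes g f :: "('v,'a,'k::comm_ring_1) cochain"
  assumes nz: "cup Q a b g f (q, r) \<noteq> 0"
  obtains i1 i2 i3 i4 b1 b2 where "i1 \<le> i2" "i2 \<le> i3" "i3 \<le> i4" "i4 \<le> plen q"
    and "q \<in> Gamma Q (a + b + 1)"
    and "g (subpath Q q i3 i4, b2) \<noteq> 0" and "f (subpath Q q i1 i2, b1) \<noteq> 0"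
proof -
  define summand where "summand i1 i2 i3 i4 b2 b1 =
    (let a0 = subpath Q q 0 i1; p1 = subpath Q q i1 i2; c = subpath Q q i2 i3;
         p2 = subpath Q q i3 i4; e = subpath Q q i4 (plen q)
     in if p1 \<in> Gamma Q b \<and> p2 \<in> Gamma Q a \<and> parallel Q p1 b1 \<and> parallel Q p2 b2 \<and>
           cat e (cat b2 (cat c (cat b1 a0))) = r
        then g (p2, b2) * f (p1, b1) else 0)" for i1 i2 i3 i4 b2 b1
  have G: "q \<in> Gamma Q (a + b + 1) \<and> r \<in> basis Q \<and> parallel Q q r"
  proof (rule ccontr)
    assume "\<not> (q \<in> Gamma Q (a + b + 1) \<and> r \<in> basis Q \<and> parallel Q q r)"
    then have "cup Q a b g f (q, r) = 0" unfolding cup_def prod.case by (rule if_not_P)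
    then show False using nz by contradiction
  qed
  have "(\<Sum>(i1, i2, i3, i4)\<in>{(i1, i2, i3, i4). i1 \<le> i2 \<and> i2 \<le> i3 \<and> i3 \<le> i4 \<and> i4 \<le> plen q}.
          \<Sum>b2\<in>basis Q. \<Sum>b1\<in>basis Q. summand i1 i2 i3 i4 b2 b1) \<noteq> 0"
    using nz G unfolding cup_def summand_def by simp
  then obtain t where t: "t \<in> {(i1, i2, i3, i4). i1 \<le> i2 \<and> i2 \<le> i3 \<and> i3 \<le> i4 \<and> i4 \<le> plen q}"
    and "(case t of (i1, i2, i3, i4) \<Rightarrow> \<Sum>b2\<in>basis Q. \<Sum>b1\<in>basis Q. summand i1 i2 i3 i4 b2 b1) \<noteq> 0"
    by (rule sum.not_neutral_contains_not_neutral)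
  moreover obtain i1 i2 i3 i4 where t_eq: "t = (i1, i2, i3, i4)" by (rule prod_cases4)
  ultimately have "(\<Sum>b2\<in>basis Q. \<Sum>b1\<in>basis Q. summand i1 i2 i3 i4 b2 b1) \<noteq> 0" by simp
  then obtain b2 where "(\<Sum>b1\<in>basis Q. summand i1 i2 i3 i4 b2 b1) \<noteq> 0"
    by (rule sum.not_neutral_contains_not_neutral)
  then obtain b1 where "summand i1 i2 i3 i4 b2 b1 \<noteq> 0"
    by (rule sum.not_neutral_contains_not_neutral)
  then have "g (subpath Q q i3 i4, b2) * f (subpath Q q i1 i2, b1) \<noteq> 0"
    unfolding summand_def Let_def by (simp split: if_splits)
  then have gf: "g (subpath Q q i3 i4, b2) \<noteq> 0" "f (subpath Q q i1 i2, b1) \<noteq> 0" by auto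
  show ?thesis by (rule that[OF _ _ _ _ _ gf]) (use t t_eq G in simp_all)
qed

lemma cup_nonzero_reach:
  fixes g f :: "('v,'a,'k::comm_ring_1) cochain"
  assumes mq: "monomial_quiver Q" and ne: "cup Q a b g f \<noteq> (\<lambda>_. 0)"
  obtains p1 b1 p2 b2 where "g (p2, b2) \<noteq> 0" and "f (p1, b1) \<noteq> 0"
    and "reach Q (pend Q p1) (pstart p2)"
proof -
  obtain q r where "cup Q a b g f (q, r) \<noteq> 0"
  proof (rule ccontr)
    assume "\<not> thesis"
    then have "cup Q a b g f (q, r) = 0" for q r using that by blast
    then have "cup Q a b g f = (\<lambda>_. 0)" by (simp add: fun_eq_iff split_paired_all)
    with ne show False by contradiction
  qed
  then obtain i1 i2 i3 i4 b1 b2 where i: "i1 \<le> i2" "i2 \<le> i3" "i3 \<le> i4" "i4 \<le> plen q"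
    and G: "q \<in> Gamma Q (a + b + 1)"
    and gf: "g (subpath Q q i3 i4, b2) \<noteq> 0" "f (subpath Q q i1 i2, b1) \<noteq> 0"
    by (rule cup_nonzero_term)
  have "reach Q (pend Q (subpath Q q i1 i2)) (pstart (subpath Q q i3 i4))"
    using reach_vert_at[OF mq Gamma_valid[OF G], of i2 i3] i by (simp add: pend_subpath pstart_subpath)
  then show ?thesis using that gf by blast
qed

theorem mainTheorem13:
  fixes Q :: "('v,'a) mquiver"
    and x y :: "('v,'a,'k::field) cochain"
    and m n :: nat
  assumes "monomial_quiver Q"
    and "fin_dim Q"
    and "triangular Q"
    and "m > 0" and "n > 0"
    and "irreducible_cocycle Q (m - 1) x"
    and "irreducible_cocycle Q (n - 1) y"
    and "cup Q (m - 1) (n - 1) x y \<noteq> (\<lambda>_. 0)"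
  shows "cup Q (n - 1) (m - 1) y x = (\<lambda>_. 0)"
proof (rule ccontr)
  assume yx_nz: "cup Q (n - 1) (m - 1) y x \<noteq> (\<lambda>_. 0)"
  note mq = assms(1) and tr = assms(3)
  obtain p1 b1 p2 b2 where xy: "x (p2, b2) \<noteq> 0" "y (p1, b1) \<noteq> 0" "reach Q (pend Q p1) (pstart p2)"
    by (rule cup_nonzero_reach[OF mq assms(8)])
  obtain p1' b1' p2' b2' where yx: "y (p2', b2') \<noteq> 0" "x (p1', b1') \<noteq> 0" "reach Q (pend Q p1') (pstart p2')"
    by (rule cup_nonzero_reach[OF mq yx_nz])
  have "reach1 Q (pstart p2) (pend Q p1')"
    using irreducible_cocycle_reach1[OF mq tr assms(6) xy(1) yx(2)] by simp
  then have "reach1 Q (pend Q p1) (pstart p2')"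
    by (rule reach1_reach_trans[OF reach_reach1_trans[OF xy(3)] yx(3)])
  moreover have "reach1 Q (pstart p2') (pend Q p1)"
    using irreducible_cocycle_reach1[OF mq tr assms(7) yx(1) xy(2)] by simp
  ultimately have "reach1 Q (pend Q p1) (pend Q p1)"
    by (rule reach1_reach_trans[OF _ reach1_imp_reach])
  then show False using triangular_not_reach1_refl[OF tr] by blast
qed

end
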